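(* Let $n,r$ be positive integers with $2\leq r\leq n$. Then (a) $(\mathfrak{H}_{n,k}^{r}, \mathfrak{M}_{n,k}^{r})$ is a maximal and stable cross-intersecting pair in $\mathcal{I}_{n,k}^{r}$; and (b) if $r \leq n-1$, then $\mathcal{H}_{n,k}^r$ is a maximal and stable intersecting family in $\mathcal{I}_{n,k}^{r}$.
   Context: $\Gamma_{n,k}$ is the disjoint union of $n$ copies of $K_k$, with vertices $(i,j)$, $i\in[n]$, $j\in[k]$; $\mathcal{I}_{n,k}^r$ is the set of its independent sets of size $r$. $\mathfrak{H}_{n,k}^{r}=\{[r]\times\{1\}\}$, $\mathfrak{M}_{n,k}^{r}=\{X\in\mathcal{I}_{n,k}^r : X\cap([r]\times\{1\})\neq\emptyset\}$. For $r\le n-1$, with $H=[2,r+1]\times\{1\}$, $\mathcal{H}_{n,k}^r = \{ F \in \mathcal{I}_{n,k}^r : (1,1)\in F,\ F \cap H \neq \emptyset \} \cup \{H\}$. A pair of non-empty families is cross-intersecting if each member of the first meets each member of the second; it is maximal if not contained componentwise in a different cross-intersecting pair in $\mathcal{I}_{n,k}^r$. An intersecting family is maximal if it is not properly contained in an intersecting family in $\mathcal{I}_{n,k}^r$. For $i\in[n],s\in[2,k]$: $P_{i,s}(X)=(X\setminus\{(i,s)\})\cup\{(i,1)\}$ if $(i,s)\in X$, else $X$; $\pi_{i,s}(\mathcal{F})=\{P_{i,s}(X):X\in\mathcal{F}\}\cup\{X\in\mathcal{F}:P_{i,s}(X)\in\mathcal{F}\}$; a family is stable if $\pi_{i,s}(\mathcal{F})=\mathcal{F}$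 for all $i\in[n],s\in[2,k]$, and a pair is stable if both families are. *)

theory Defs
  imports Main
begin

type_synonym vertex = "nat \<times> nat"

text \<open>Vertices of Gamma_{n,k}: (i,j) with i in [n], j in [k]; two distinct vertices are
adjacent iff they lie in the same copy i of K_k.\<close>
definition vertices :: "nat \<Rightarrow> nat \<Rightarrow> vertex set" where
  "vertices n k = {1..n} \<times> {1..k}"

definition indep_sets :: "nat \<Rightarrow> nat \<Rightarrow> nat \<Rightarrow> vertex set set" where
  "indep_sets n k r = {X. X \<subseteq> vertices n k \<and> card X = r \<and>
      (\<forall>x\<in>X. \<forall>y\<in>X. fst x = fst y \<longrightarrow> x = y)}"

definition cross_intersecting :: "vertex set set \<Rightarrow> vertex set set \<Rightarrow> bool" where
  "cross_intersecting A B \<longleftrightarrow> A \<noteq> {} \<and> B \<noteq> {} \<and> (\<forall>X\<in>A. \<forall>Y\<in>B. X \<inter> Y \<noteq> {})"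

definition maximal_cross_intersecting ::
  "nat \<Rightarrow> nat \<Rightarrow> nat \<Rightarrow> vertex set set \<Rightarrow> vertex set set \<Rightarrow> bool" where
  "maximal_cross_intersecting n k r A B \<longleftrightarrow>
     A \<subseteq> indep_sets n k r \<and> B \<subseteq> indep_sets n k r \<and> cross_intersecting A B \<and>
     (\<forall>A' B'. A' \<subseteq> indep_sets n k r \<and> B' \<subseteq> indep_sets n k r \<and>
        cross_intersecting A' B' \<and> A \<subseteq> A' \<and> B \<subseteq> B' \<longrightarrow> A' = A \<and> B' = B)"

definition intersecting :: "vertex set set \<Rightarrow> bool" where
  "intersecting F \<longleftrightarrow> (\<forall>X\<in>F. \<forall>Y\<in>F. X \<inter> Y \<noteq> {})"

definition maximal_intersecting :: "nat \<Rightarrow> nat \<Rightarrow> nat \<Rightarrow> vertex set set \<Rightarrow> bool" where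
  "maximal_intersecting n k r F \<longleftrightarrow>
     F \<subseteq> indep_sets n k r \<and> intersecting F \<and>
     (\<forall>G. G \<subseteq> indep_sets n k r \<and> intersecting G \<and> F \<subseteq> G \<longrightarrow> G = F)"

definition shiftP :: "nat \<Rightarrow> nat \<Rightarrow> vertex set \<Rightarrow> vertex set" where
  "shiftP i s X = (if (i, s) \<in> X then (X - {(i, s)}) \<union> {(i, 1)} else X)"

definition shift_family :: "nat \<Rightarrow> nat \<Rightarrow> vertex set set \<Rightarrow> vertex set set" where
  "shift_family i s F = shiftP i s ` F \<union> {X \<in> F. shiftP i s X \<in> F}"

definition stable :: "nat \<Rightarrow> nat \<Rightarrow> vertex set set \<Rightarrow> bool" where
  "stable n k F \<longleftrightarrow> (\<forall>i\<in>{1..n}. \<forall>s\<in>{2..k}. shift_family i s F = F)"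

definition frakH :: "nat \<Rightarrow> vertex set set" where
  "frakH r = {{1..r} \<times> {1}}"

definition frakM :: "nat \<Rightarrow> nat \<Rightarrow> nat \<Rightarrow> vertex set set" where
  "frakM n k r = {X \<in> indep_sets n k r. X \<inter> ({1..r} \<times> {1}) \<noteq> {}}"

definition calH :: "nat \<Rightarrow> nat \<Rightarrow> nat \<Rightarrow> vertex set set" where
  "calH n k r = {F \<in> indep_sets n k r. (1, 1) \<in> F \<and> F \<inter> ({2..r+1} \<times> {1}) \<noteq> {}}
                 \<union> {{2..r+1} \<times> {1}}"

end

theory Submission
  imports Defs
begin

text \<open>Maximality is witnessed by disjointness: if a set $X$ could be added to a family, a member
  of the family can be chosen disjoint from $X$, because every independent set of size at most
  $r$ missing $X$ extends to an independent $r$-set missing $X$ ($k \<ge> 2$ leaves a vertex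
  outside $X$ in every copy of $K_k$). Stability holds because a shift only moves vertices into
  column 1, and every set that members are required to meet lies in column 1.\<close>

lemma indep_sets_iff:
  "X \<in> indep_sets n k r \<longleftrightarrow> X \<subseteq> vertices n k \<and> card X = r \<and> inj_on fst X"
  by (auto simp: indep_sets_def inj_on_def)

lemma finite_vertices [simp]: "finite (vertices n k)"
  by (simp add: vertices_def)

lemma indep_sets_finite: "X \<in> indep_sets n k r \<Longrightarrow> finite X"
  by (auto simp: indep_sets_iff intro: finite_subset[OF _ finite_vertices])

lemma indep_sets_size_le:
  assumes "X \<in> indep_sets n k r"
  shows "r \<le> n"
proof -
  have "fst ` X \<subseteq> {1..n}"
    using assms by (auto simp: indep_sets_iff vertices_def)
  then have "card (fst ` X) \<le> n"
    using card_mono[of "{1..n}"] by fastforce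
  then show ?thesis
    using assms by (simp add: indep_sets_iff card_image)
qed

lemma column_one_in_indep_sets:
  assumes "1 \<le> a" "b \<le> n" "1 \<le> k"
  shows "{a..b} \<times> {1} \<in> indep_sets n k (Suc b - a)"
  using assms by (auto simp: indep_sets_iff vertices_def card_cartesian_product inj_on_def)

text \<open>Fill $S$ up with one vertex in each of $r - |S|$ unused copies of $K_k$, in column 1
  unless $X$ occupies it, else in column 2.\<close>
lemma indep_sets_extend_avoiding:
  assumes X: "X \<in> indep_sets n k r" and S: "S \<subseteq> vertices n k" "inj_on fst S"
    and disj: "S \<inter> X = {}" and card_S: "card S \<le> r" and k: "2 \<le> k"
  shows "\<exists>Y\<in>indep_sets n k r. S \<subseteq> Y \<and> Y \<inter> X = {}"
proof -
  have fin_S: "finite S"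
    using S(1) by (rule finite_subset) simp
  have rows_S: "fst ` S \<subseteq> {1..n}"
    using S(1) by (auto simp: vertices_def)
  have "card ({1..n} - fst ` S) = n - card S"
    using card_Diff_subset[OF finite_imageI[OF fin_S] rows_S] card_image[OF S(2)] by simp
  then have "r - card S \<le> card ({1..n} - fst ` S)"
    using indep_sets_size_le[OF X] by simp
  then obtain R where R: "R \<subseteq> {1..n} - fst ` S" "card R = r - card S"
    by (meson obtain_subset_with_card_n)
  define c where "c j = (if (j, 1) \<in> X then 2 else 1 :: nat)" for j
  define T where "T = (\<lambda>j. (j, c j)) ` R"
  have inj_X: "inj_on fst X"
    using X by (simp add: indep_sets_iff)
  have "T \<inter> X = {}"
  proof (rule ccontr)
    assume "T \<inter> X \<noteq> {}"
    then obtain j where "(j, c j) \<in> X"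
      by (auto simp: T_def)
    then show False
      using inj_onD[OF inj_X, of "(j, 1)" "(j, 2)"] by (auto simp: c_def split: if_splits)
  qed
  have fst_T: "fst ` T = R"
    by (force simp: T_def)
  have inj_T: "inj_on fst T"
    by (auto simp: T_def inj_on_def)
  have card_T: "card T = card R"
    unfolding T_def by (rule card_image) (simp add: inj_on_def)
  have rows_disj: "fst ` S \<inter> fst ` T = {}"
    using R(1) fst_T by blast
  have "finite T"
    unfolding T_def using R(1) finite_subset[of R "{1..n}"] by blast
  moreover have "S \<inter> T = {}"
    using rows_disj by blast
  ultimately have "card (S \<union> T) = r"
    using card_Un_disjoint[OF fin_S] card_T R(2) card_S by simp
  moreover have "inj_on fst (S \<union> T)"
    using S(2) inj_T rows_disj by (simp add: inj_on_Un) blast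
  moreover have "S \<union> T \<subseteq> vertices n k"
    using S(1) R(1) k by (auto simp: T_def vertices_def c_def)
  ultimately have "S \<union> T \<in> indep_sets n k r"
    by (simp add: indep_sets_iff)
  then show ?thesis
    using disj \<open>T \<inter> X = {}\<close> by blast
qed

lemma shiftP_in_indep_sets:
  assumes X: "X \<in> indep_sets n k r"
  shows "shiftP i s X \<in> indep_sets n k r"
proof (cases "(i, s) \<in> X")
  case False
  then show ?thesis
    using X by (simp add: shiftP_def)
next
  case True
  have inj_X: "inj_on fst X" and X_vert: "X \<subseteq> vertices n k" and card_X: "card X = r"
    using X by (auto simp: indep_sets_iff)
  have row_i: "i \<notin> fst ` (X - {(i, s)})"
    using inj_onD[OF inj_X _ _ True] by force
  then have "inj_on fst (insert (i, 1) (X - {(i, s)}))"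
    using inj_X by (simp add: inj_on_diff) blast
  moreover have "card (insert (i, 1) (X - {(i, s)})) = r"
  proof -
    have "(i, 1) \<notin> X - {(i, s)}"
      using row_i by force
    then have "card (insert (i, 1) (X - {(i, s)})) = Suc (card (X - {(i, s)}))"
      using indep_sets_finite[OF X] by simp
    also have "\<dots> = r"
      using card_Suc_Diff1[OF indep_sets_finite[OF X] True] card_X by simp
    finally show ?thesis .
  qed
  moreover have "insert (i, 1) (X - {(i, s)}) \<subseteq> vertices n k"
    using X_vert True by (auto simp: vertices_def)
  ultimately show ?thesis
    using True by (simp add: shiftP_def indep_sets_iff)
qed

lemma in_shiftP: "x \<in> X \<Longrightarrow> x \<noteq> (i, s) \<Longrightarrow> x \<in> shiftP i s X"
  by (simp add: shiftP_def)

lemma stable_iff_shift_closed: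
  "stable n k F \<longleftrightarrow> (\<forall>i\<in>{1..n}. \<forall>s\<in>{2..k}. \<forall>X\<in>F. shiftP i s X \<in> F)"
  unfolding stable_def shift_family_def by blast

lemma stable_Un: "stable n k F \<Longrightarrow> stable n k G \<Longrightarrow> stable n k (F \<union> G)"
  by (auto simp: stable_iff_shift_closed)

lemma stable_meeting_column_one:
  assumes "\<forall>B\<in>\<B>. B \<subseteq> UNIV \<times> {1}"
  shows "stable n k {X \<in> indep_sets n k r. \<forall>B\<in>\<B>. X \<inter> B \<noteq> {}}"
  unfolding stable_iff_shift_closed
proof (intro ballI)
  fix i s X
  assume s: "s \<in> {2..k}" and X: "X \<in> {X \<in> indep_sets n k r. \<forall>B\<in>\<B>. X \<inter> B \<noteq> {}}"
  have "shiftP i s X \<inter> B \<noteq> {}" if "B \<in> \<B>" for B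
  proof -
    have "X \<inter> B \<noteq> {}"
      using X that by simp
    then obtain x where x: "x \<in> X" "x \<in> B"
      by blast
    have "B \<subseteq> UNIV \<times> {1}"
      using assms that by blast
    then have "x \<noteq> (i, s)"
      using x(2) s by auto
    then show ?thesis
      using in_shiftP[OF x(1)] x(2) by blast
  qed
  moreover have "shiftP i s X \<in> indep_sets n k r"
    using X shiftP_in_indep_sets[of X n k r i s] by simp
  ultimately show "shiftP i s X \<in> {X \<in> indep_sets n k r. \<forall>B\<in>\<B>. X \<inter> B \<noteq> {}}"
    by simp
qed

lemma stable_column_one_singleton:
  assumes "B \<subseteq> UNIV \<times> {1}"
  shows "stable n k {B}"
proof -
  have "(i, s) \<notin> B" if "2 \<le> s" for i s
    using assms that by auto
  then show ?thesis
    by (simp add: stable_iff_shift_closed shiftP_def)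
qed

lemma indep_sets_not_subset:
  assumes "X \<in> indep_sets n k r" "D \<in> indep_sets n k r" "X \<noteq> D"
  shows "\<not> D \<subseteq> X"
  using assms card_subset_eq[OF indep_sets_finite[OF assms(1)], of D]
  by (auto simp: indep_sets_iff)

lemma maximal_cross_intersecting_singleton:
  assumes D: "D \<in> indep_sets n k r" and r: "1 \<le> r" and k: "2 \<le> k"
  shows "maximal_cross_intersecting n k r {D} {X \<in> indep_sets n k r. X \<inter> D \<noteq> {}}"
    (is "maximal_cross_intersecting n k r {D} ?M")
proof -
  have "D \<noteq> {}"
    using D r by (auto simp: indep_sets_iff)
  then have cross: "cross_intersecting {D} ?M"
    using D by (auto simp: cross_intersecting_def)
  have "A = {D} \<and> B = ?M"
    if A: "A \<subseteq> indep_sets n k r" and B: "B \<subseteq> indep_sets n k r"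
      and AB: "cross_intersecting A B" and "{D} \<subseteq> A" "?M \<subseteq> B" for A B
  proof
    have "A \<subseteq> {D}"
    proof
      fix X assume "X \<in> A"
      show "X \<in> {D}"
      proof (rule ccontr)
        assume "X \<notin> {D}"
        then obtain d where d: "d \<in> D" "d \<notin> X"
          using indep_sets_not_subset[of X n k r D] A \<open>X \<in> A\<close> D by blast
        have "{d} \<subseteq> vertices n k"
          using d(1) D by (auto simp: indep_sets_iff)
        then obtain Y where Y: "Y \<in> indep_sets n k r" "d \<in> Y" "Y \<inter> X = {}"
          using indep_sets_extend_avoiding[of X n k r "{d}"] A \<open>X \<in> A\<close> d(2) r k by auto
        then have "Y \<in> B"
          using d(1) \<open>?M \<subseteq> B\<close> by blast
        then show False
          using AB \<open>X \<in> A\<close> Y(3) by (auto simp: cross_intersecting_def Int_commute)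
      qed
    qed
    then show "A = {D}"
      using \<open>{D} \<subseteq> A\<close> by blast
    have "B \<subseteq> ?M"
    proof
      fix Y assume "Y \<in> B"
      then have "D \<inter> Y \<noteq> {}"
        using AB \<open>{D} \<subseteq> A\<close> by (auto simp: cross_intersecting_def)
      then show "Y \<in> ?M"
        using B \<open>Y \<in> B\<close> by blast
    qed
    then show "B = ?M"
      using \<open>?M \<subseteq> B\<close> by blast
  qed
  then show ?thesis
    using D cross by (auto simp: maximal_cross_intersecting_def)
qed

lemma maximal_intersecting_hilton_milner_type:
  assumes D: "D \<in> indep_sets n k r" and a: "a \<in> vertices n k" "fst a \<notin> fst ` D"
    and r: "2 \<le> r" and k: "2 \<le> k"
  shows "maximal_intersecting n k r ({X \<in> indep_sets n k r. a \<in> X \<and> X \<inter> D \<noteq> {}} \<union> {D})"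
    (is "maximal_intersecting n k r ?H")
proof -
  have "D \<noteq> {}"
    using D r by (auto simp: indep_sets_iff)
  then have inters: "intersecting ?H"
    by (auto simp: intersecting_def)
  have "X \<in> ?H" if G: "G \<subseteq> indep_sets n k r" "intersecting G" "?H \<subseteq> G" and "X \<in> G" for G X
  proof (rule ccontr)
    assume "X \<notin> ?H"
    have X: "X \<in> indep_sets n k r"
      using G(1) \<open>X \<in> G\<close> by blast
    have "X \<inter> D \<noteq> {}"
      using G \<open>X \<in> G\<close> by (auto simp: intersecting_def)
    then have "a \<notin> X" "X \<noteq> D"
      using \<open>X \<notin> ?H\<close> X by auto
    then obtain d where d: "d \<in> D" "d \<notin> X"
      using indep_sets_not_subset[OF X D] by blast
    have "fst a \<noteq> fst d"
      using a(2) d(1) by auto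
    then have "inj_on fst {a, d}"
      by (auto simp: inj_on_def)
    moreover have "card {a, d} \<le> r"
      using r by (simp add: card_insert_if)
    moreover have "{a, d} \<subseteq> vertices n k"
      using a(1) d(1) D by (auto simp: indep_sets_iff)
    ultimately obtain Y where Y: "Y \<in> indep_sets n k r" "{a, d} \<subseteq> Y" "Y \<inter> X = {}"
      using indep_sets_extend_avoiding[OF X, of "{a, d}"] \<open>a \<notin> X\<close> d(2) r k by auto
    then have "Y \<in> G"
      using d(1) G(3) by blast
    then show False
      using G(2) \<open>X \<in> G\<close> Y(3) by (auto simp: intersecting_def Int_commute)
  qed
  then show ?thesis
    using D inters by (auto simp: maximal_intersecting_def)
qed

theorem corollary4p8:
  fixes n k r :: nat
  assumes "2 \<le> r" and "r \<le> n" and "2 \<le> k"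
  shows "(maximal_cross_intersecting n k r (frakH r) (frakM n k r) \<and>
           stable n k (frakH r) \<and> stable n k (frakM n k r)) \<and>
         (r \<le> n - 1 \<longrightarrow> maximal_intersecting n k r (calH n k r) \<and> stable n k (calH n k r))"
proof (intro conjI impI)
  define D where "D = {1..r} \<times> {1::nat}"
  have D: "D \<in> indep_sets n k r"
    using column_one_in_indep_sets[of 1 r n k] assms by (simp add: D_def)
  have M: "frakM n k r = {X \<in> indep_sets n k r. \<forall>B\<in>{D}. X \<inter> B \<noteq> {}}"
    by (simp add: frakM_def D_def)
  show "maximal_cross_intersecting n k r (frakH r) (frakM n k r)"
    using maximal_cross_intersecting_singleton[OF D] assms by (simp add: frakH_def frakM_def D_def)
  show "stable n k (frakH r)"
    unfolding frakH_def by (rule stable_column_one_singleton) auto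
  show "stable n k (frakM n k r)"
    unfolding M by (rule stable_meeting_column_one) (auto simp: D_def)
  assume "r \<le> n - 1"
  define D' where "D' = {2..r+1} \<times> {1::nat}"
  have D': "D' \<in> indep_sets n k r"
    using column_one_in_indep_sets[of 2 "r+1" n k] assms \<open>r \<le> n - 1\<close> by (simp add: D'_def)
  have H: "calH n k r = {X \<in> indep_sets n k r. (1, 1) \<in> X \<and> X \<inter> D' \<noteq> {}} \<union> {D'}"
    by (simp add: calH_def D'_def)
  have "(1, 1) \<in> vertices n k" "1 \<notin> fst ` D'"
    using assms by (auto simp: vertices_def D'_def)
  then show "maximal_intersecting n k r (calH n k r)"
    unfolding H using maximal_intersecting_hilton_milner_type[OF D', of "(1, 1)"] assms by simp
  have "calH n k r = {X \<in> indep_sets n k r. \<forall>B\<in>{{(1, 1)}, D'}. X \<inter> B \<noteq> {}} \<union> {D'}"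
    unfolding H by auto
  then show "stable n k (calH n k r)"
    by (simp only:) (intro stable_Un stable_meeting_column_one stable_column_one_singleton;
        auto simp: D'_def)
qed

end
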